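(* Let $\Gamma$ be a group and $\alpha\in\mathrm{Aut}(\Gamma)$. The centre $Z(G(\alpha))$ consists exactly of the elements of $K(\alpha)$ which, viewed as maps $\mathbb Q_2\to\Gamma$, are constant with value in $Z\Gamma\cap\Gamma^\alpha$.
   Context: $\{0,1\}^*$ denotes the finite words over $\{0,1\}$ (including the empty word), $|u|$ the length; $\mathfrak C=\{0,1\}^{\mathbb N}$; $\mathbb Q_2\subset\mathfrak C$ the eventually-zero sequences $u00\cdots$. A finite complete prefix code is a finite set $\{t_1,\dots,t_n\}\subset\{0,1\}^*$ such that every $x\in\mathfrak C$ has exactly one $t_i$ as prefix. Thompson's group $V$ is the group of homeomorphisms $v$ of $\mathfrak C$ for which there exist finite complete prefix codes $\{t_i\},\{s_i\}$ and a permutation $\sigma$ with $v(t_iw)=s_{\sigma(i)}w$. $K(\alpha)$ is the group of maps $a:\{0,1\}^*\to\Gamma$ (pointwise product) with $a(u)=\alpha(a(u0))$ for all $u$; $V$ acts on it by $\pi(v)(a)(s_{\sigma(i)}u)=a(t_iu)$ for all $i$, $u\in\{0,1\}^*$ (determining $\pi(v)(a)$ uniquely); $G(\alpha):=K(\alpha)\rtimes V$ with $vav^{-1}=\pi(v)(a)$. An element $a\in K(\alpha)$ is viewed as the map $\mathbb Q_2\to\Gamma$, $x\mapsto\alpha^{|u|}(a(u))$ where $x=u00\cdots$ (well defined, giving an isomorphism $K(\alpha)\cong\prod_{\mathbb Q_2}\Gamma$). $\Gamma^\alpha$ is the set of fixed points of $\alpha$ and $Z\Gamma$ the centre of $\Gamma$.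 *)

theory Defs
  imports "HOL-Analysis.Analysis" "HOL-Algebra.Group"
begin

text \<open>Finite words over {0,1} are bool lists (False = 0, True = 1); the Cantor space
  is nat \<Rightarrow> bool with the product topology.\<close>

definition pref :: "bool list \<Rightarrow> (nat \<Rightarrow> bool) \<Rightarrow> nat \<Rightarrow> bool" where
  "pref t w = (\<lambda>k. if k < length t then t ! k else w (k - length t))"

definition is_prefix_of :: "bool list \<Rightarrow> (nat \<Rightarrow> bool) \<Rightarrow> bool" where
  "is_prefix_of t x \<longleftrightarrow> (\<forall>i < length t. x i = t ! i)"

definition complete_prefix_code :: "bool list set \<Rightarrow> bool" where
  "complete_prefix_code T \<longleftrightarrow> finite T \<and> (\<forall>x. \<exists>!t. t \<in> T \<and> is_prefix_of t x)"

definition V_table ::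
  "((nat \<Rightarrow> bool) \<Rightarrow> (nat \<Rightarrow> bool)) \<Rightarrow> bool list list \<Rightarrow> bool list list \<Rightarrow> (nat \<Rightarrow> nat) \<Rightarrow> bool" where
  "V_table v ts ss \<sigma> \<longleftrightarrow> length ts = length ss \<and> distinct ts \<and> distinct ss
     \<and> complete_prefix_code (set ts) \<and> complete_prefix_code (set ss)
     \<and> \<sigma> permutes {..<length ts}
     \<and> (\<forall>i < length ts. \<forall>w. v (pref (ts ! i) w) = pref (ss ! \<sigma> i) w)"

definition ThompsonV :: "((nat \<Rightarrow> bool) \<Rightarrow> (nat \<Rightarrow> bool)) set" where
  "ThompsonV = {v. (\<exists>g. homeomorphism UNIV UNIV v g) \<and> (\<exists>ts ss \<sigma>. V_table v ts ss \<sigma>)}"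

definition Kalpha :: "('g, 'b) monoid_scheme \<Rightarrow> ('g \<Rightarrow> 'g) \<Rightarrow> (bool list \<Rightarrow> 'g) set" where
  "Kalpha \<Gamma> \<alpha> = {a. (\<forall>u. a u \<in> carrier \<Gamma>) \<and> (\<forall>u. a u = \<alpha> (a (u @ [False])))}"

definition piV :: "('g, 'b) monoid_scheme \<Rightarrow> ('g \<Rightarrow> 'g) \<Rightarrow> ((nat \<Rightarrow> bool) \<Rightarrow> (nat \<Rightarrow> bool))
     \<Rightarrow> (bool list \<Rightarrow> 'g) \<Rightarrow> (bool list \<Rightarrow> 'g)" where
  "piV \<Gamma> \<alpha> v a = (THE b. b \<in> Kalpha \<Gamma> \<alpha> \<and>
      (\<exists>ts ss \<sigma>. V_table v ts ss \<sigma> \<and>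
         (\<forall>i < length ts. \<forall>u. b (ss ! \<sigma> i @ u) = a (ts ! i @ u))))"

text \<open>G(\<alpha>) = K(\<alpha>) \<rtimes> V, elements (a, v) standing for a v, with v a v^{-1} = \<pi>(v)(a);
  V is a group of homeomorphisms under composition.\<close>
definition Galpha_carrier ::
  "('g, 'b) monoid_scheme \<Rightarrow> ('g \<Rightarrow> 'g) \<Rightarrow> ((bool list \<Rightarrow> 'g) \<times> ((nat \<Rightarrow> bool) \<Rightarrow> (nat \<Rightarrow> bool))) set" where
  "Galpha_carrier \<Gamma> \<alpha> = Kalpha \<Gamma> \<alpha> \<times> ThompsonV"

definition Galpha_mult ::
  "('g, 'b) monoid_scheme \<Rightarrow> ('g \<Rightarrow> 'g)
   \<Rightarrow> ((bool list \<Rightarrow> 'g) \<times> ((nat \<Rightarrow> bool) \<Rightarrow> (nat \<Rightarrow> bool)))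
   \<Rightarrow> ((bool list \<Rightarrow> 'g) \<times> ((nat \<Rightarrow> bool) \<Rightarrow> (nat \<Rightarrow> bool)))
   \<Rightarrow> ((bool list \<Rightarrow> 'g) \<times> ((nat \<Rightarrow> bool) \<Rightarrow> (nat \<Rightarrow> bool)))" where
  "Galpha_mult \<Gamma> \<alpha> g h =
     ((\<lambda>u. fst g u \<otimes>\<^bsub>\<Gamma>\<^esub> piV \<Gamma> \<alpha> (snd g) (fst h) u), snd g \<circ> snd h)"

definition Galpha_centre ::
  "('g, 'b) monoid_scheme \<Rightarrow> ('g \<Rightarrow> 'g) \<Rightarrow> ((bool list \<Rightarrow> 'g) \<times> ((nat \<Rightarrow> bool) \<Rightarrow> (nat \<Rightarrow> bool))) set" where
  "Galpha_centre \<Gamma> \<alpha> = {g \<in> Galpha_carrier \<Gamma> \<alpha>.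
      \<forall>h \<in> Galpha_carrier \<Gamma> \<alpha>. Galpha_mult \<Gamma> \<alpha> g h = Galpha_mult \<Gamma> \<alpha> h g}"

text \<open>Dyadic rationals Q_2: eventually zero sequences u00...\<close>
definition zeros :: "nat \<Rightarrow> bool" where "zeros = (\<lambda>_. False)"

definition Q2 :: "(nat \<Rightarrow> bool) set" where
  "Q2 = {x. \<exists>u. x = pref u zeros}"

text \<open>a \<in> K(\<alpha>) as a map Q_2 \<rightarrow> \<Gamma>: x = u00... \<mapsto> \<alpha>^{|u|}(a u).\<close>
definition Kval :: "('g \<Rightarrow> 'g) \<Rightarrow> (bool list \<Rightarrow> 'g) \<Rightarrow> (nat \<Rightarrow> bool) \<Rightarrow> 'g" where
  "Kval \<alpha> a x = (let u = (SOME u. x = pref u zeros) in (\<alpha> ^^ length u) (a u))"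

definition group_centre :: "('g, 'b) monoid_scheme \<Rightarrow> 'g set" where
  "group_centre \<Gamma> = {z \<in> carrier \<Gamma>. \<forall>g \<in> carrier \<Gamma>. z \<otimes>\<^bsub>\<Gamma>\<^esub> g = g \<otimes>\<^bsub>\<Gamma>\<^esub> z}"

definition fixed_points :: "('g, 'b) monoid_scheme \<Rightarrow> ('g \<Rightarrow> 'g) \<Rightarrow> 'g set" where
  "fixed_points \<Gamma> \<alpha> = {g \<in> carrier \<Gamma>. \<alpha> g = g}"

end

theory Submission
  imports Defs
begin

(* Let (a, v) be central in G(\<alpha>). Commuting with the elements (1, w), w \<in> V, shows that v is
   central in V and that \<pi>(w) fixes a for every w. For each word t, V contains the involution
   exchanging t0u and t1u; it moves exactly the points with prefix t, so a v commuting with all of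
   them preserves every cylinder, hence v = id, and \<pi>-invariance gives a(t1) = a(t0). The
   generator x0 of F, sending 0u to 00u, gives a(00) = a(0). Together with a(u) = \<alpha>(a(u0)) and
   injectivity of \<alpha> this makes a constant with an \<alpha>-fixed value c, and commuting with (b, id),
   where b(\<epsilon>) \<in> \<Gamma> is arbitrary, puts c in Z\<Gamma>. Conversely \<pi>(v) fixes constant maps, so such
   constants are central. *)

section \<open>Finite words and the Cantor space\<close>

lemma continuous_on_if_determined_by_initial_segment:
  fixes g :: "(nat \<Rightarrow> bool) \<Rightarrow> 'b::topological_space"
  assumes "\<And>x y. (\<forall>i<N. x i = y i) \<Longrightarrow> g x = g y"
  shows "continuous_on UNIV g"
proof -
  define cyl where "cyl x = (\<Inter>i<N. (\<lambda>y. y i) -` {x i})" for x :: "nat \<Rightarrow> bool"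
  have open_cyl: "open (cyl x)" for x
    unfolding cyl_def
    by (intro open_INT ballI open_vimage[OF open_discrete continuous_on_product_coordinates]) simp
  have "x \<in> cyl x" for x
    by (simp add: cyl_def)
  moreover have "g y = g x" if "y \<in> cyl x" for x y
    using that assms by (simp add: cyl_def)
  ultimately have "g -` B = (\<Union>x\<in>g -` B. cyl x)" for B
    by blast
  then have "open (g -` B)" for B
    by (metis open_UN open_cyl)
  then show ?thesis
    by (simp add: continuous_on_open_vimage)
qed

lemma continuous_on_if_coordinates_locally_determined:
  fixes f :: "(nat \<Rightarrow> bool) \<Rightarrow> nat \<Rightarrow> bool"
  assumes "\<And>k. \<exists>N. \<forall>x y. (\<forall>i<N. x i = y i) \<longrightarrow> f x k = f y k"
  shows "continuous_on UNIV f"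
proof (rule continuous_on_coordinatewise_then_product)
  fix k
  obtain N where "\<forall>x y. (\<forall>i<N. x i = y i) \<longrightarrow> f x k = f y k"
    using assms by blast
  then show "continuous_on UNIV (\<lambda>x. f x k)"
    by (intro continuous_on_if_determined_by_initial_segment[of N]) auto
qed

lemma pref_append: "pref (p @ q) w = pref p (pref q w)"
  by (auto simp: pref_def nth_append fun_eq_iff)

lemma pref_eq_imp_eq:
  assumes "\<And>w. pref p w = pref q w"
  shows "p = q"
proof -
  have not_shorter: "\<not> length p' < length q'" if "\<And>w. pref p' w = pref q' w" for p' q' :: "bool list"
  proof
    assume "length p' < length q'"
    moreover have "pref p' (\<lambda>_. \<not> q' ! length p') (length p') = pref q' (\<lambda>_. \<not> q' ! length p') (length p')"
      using that by simp
    ultimately show False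
      by (simp add: pref_def)
  qed
  have "\<not> length p < length q" "\<not> length q < length p"
    using not_shorter[of p q] not_shorter[of q p] assms by simp_all
  then have len: "length p = length q"
    by simp
  have "p ! i = q ! i" if "i < length p" for i
    using that len fun_cong[OF assms[of zeros], of i] by (simp add: pref_def)
  with len show ?thesis
    by (simp add: nth_equalityI)
qed

lemma is_prefix_of_pref: "is_prefix_of s (pref s w)"
  by (simp add: is_prefix_of_def pref_def)

lemma is_prefix_of_take_snoc:
  assumes "k \<le> length t"
  shows "is_prefix_of (take k t @ [b]) x \<longleftrightarrow> (\<forall>i<k. x i = t ! i) \<and> x k = b"
  using assms by (auto simp: is_prefix_of_def nth_append less_Suc_eq min_def)

lemma pref_snoc_False_zeros: "pref (x @ [False]) zeros = pref x zeros"
  by (auto simp: pref_def zeros_def nth_append fun_eq_iff)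

lemma nth_append_replicate_False:
  "i < length x + n \<Longrightarrow> (x @ replicate n False) ! i = pref x zeros i"
  by (simp add: pref_def zeros_def nth_append)

lemma append_replicate_False_split:
  assumes "is_prefix_of s (pref x zeros)" "length s \<le> length x + n"
  shows "x @ replicate n False = s @ drop (length s) (x @ replicate n False)"
proof -
  have "take (length s) (x @ replicate n False) = s"
  proof (rule nth_equalityI)
    fix i
    assume "i < length (take (length s) (x @ replicate n False))"
    then have i: "i < length s" "i < length x + n"
      using assms(2) by auto
    then have "take (length s) (x @ replicate n False) ! i = pref x zeros i"
      by (simp add: nth_append_replicate_False del: take_append)
    also have "\<dots> = s ! i"
      using assms(1) i(1) by (simp add: is_prefix_of_def)
    finally show "take (length s) (x @ replicate n False) ! i = s ! i" .
  qed (use assms(2) in simp)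
  then show ?thesis
    by (metis append_take_drop_id)
qed

lemma pref_zeros_eq_imp_append_replicate:
  assumes "pref u zeros = pref u' zeros" "length u \<le> length u'"
  shows "u' = u @ replicate (length u' - length u) False"
proof (rule nth_equalityI)
  fix i
  assume i: "i < length u'"
  then have "(u @ replicate (length u' - length u) False) ! i = pref u zeros i"
    using assms(2) by (intro nth_append_replicate_False) simp
  also have "\<dots> = u' ! i"
    using assms(1) i by (simp add: pref_def)
  finally show "u' ! i = (u @ replicate (length u' - length u) False) ! i"
    by simp
qed (use assms in simp)

lemma complete_prefix_code_ex1_index:
  assumes "complete_prefix_code (set ss)" "distinct ss"
  shows "\<exists>!j. j < length ss \<and> is_prefix_of (ss ! j) y"
proof -
  obtain t where t: "t \<in> set ss" "is_prefix_of t y"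
    and unique: "\<And>t'. t' \<in> set ss \<and> is_prefix_of t' y \<Longrightarrow> t' = t"
    using assms(1) unfolding complete_prefix_code_def by metis
  obtain j where j: "j < length ss" "ss ! j = t"
    using t(1) by (metis in_set_conv_nth)
  show ?thesis
  proof (rule ex1I[of _ j])
    fix k
    assume "k < length ss \<and> is_prefix_of (ss ! k) y"
    then have "ss ! k = t"
      using unique by simp
    then show "k = j"
      using j \<open>k < length ss \<and> _\<close> assms(2) by (metis nth_eq_iff_index_eq)
  qed (use j t in simp)
qed

definition code_index :: "bool list list \<Rightarrow> (nat \<Rightarrow> bool) \<Rightarrow> nat" where
  "code_index ss x = (THE j. j < length ss \<and> is_prefix_of (ss ! j) x)"

lemma code_index:
  assumes "complete_prefix_code (set ss)" "distinct ss"
  shows "code_index ss x < length ss" "is_prefix_of (ss ! code_index ss x) x"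
  using theI'[OF complete_prefix_code_ex1_index[OF assms]] unfolding code_index_def by simp_all

lemma code_index_eq:
  assumes "complete_prefix_code (set ss)" "distinct ss" "j < length ss" "is_prefix_of (ss ! j) x"
  shows "code_index ss x = j"
  unfolding code_index_def by (rule the1_equality[OF complete_prefix_code_ex1_index[OF assms(1,2)]]) (use assms in simp)

lemma V_table_perm_less: "V_table v ts ss \<sigma> \<Longrightarrow> i < length ts \<Longrightarrow> \<sigma> i < length ss"
  unfolding V_table_def by (metis lessThan_iff permutes_in_image)

lemma V_table_obtain_index:
  assumes "V_table v ts ss \<sigma>"
  obtains i where "i < length ts" "is_prefix_of (ss ! \<sigma> i) y"
proof -
  have code: "complete_prefix_code (set ss)" "distinct ss"
    and perm: "\<sigma> permutes {..<length ts}" and len: "length ts = length ss"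
    using assms by (auto simp: V_table_def)
  define i where "i = inv_into UNIV \<sigma> (code_index ss y)"
  have "\<sigma> i = code_index ss y"
    using perm by (simp add: i_def permutes_inverses)
  moreover have "i < length ts"
    unfolding i_def using code_index(1)[OF code] len
    by (subst lessThan_iff[symmetric], subst permutes_in_image[OF permutes_inv[OF perm]]) simp
  ultimately show ?thesis
    using that code_index(2)[OF code] by simp
qed

section \<open>The action of V on K(\<alpha>)\<close>

lemma funpow_closed: "f \<in> A \<rightarrow> A \<Longrightarrow> x \<in> A \<Longrightarrow> (f ^^ n) x \<in> A"
  by (induction n) auto

lemma funpow_fixed_point: "f z = z \<Longrightarrow> (f ^^ n) z = z"
  by (induction n) auto

lemma Kalpha_in_carrier: "a \<in> Kalpha \<Gamma> \<alpha> \<Longrightarrow> a u \<in> carrier \<Gamma>"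
  unfolding Kalpha_def by blast

lemma Kalpha_snoc_False: "a \<in> Kalpha \<Gamma> \<alpha> \<Longrightarrow> a u = \<alpha> (a (u @ [False]))"
  unfolding Kalpha_def by blast

lemma Kalpha_append_replicate_False:
  assumes "a \<in> Kalpha \<Gamma> \<alpha>"
  shows "a u = (\<alpha> ^^ n) (a (u @ replicate n False))"
proof (induction n)
  case (Suc n)
  then show ?case
    using Kalpha_snoc_False[OF assms, of "u @ replicate n False"]
    by (simp add: funpow_swap1 replicate_append_same[symmetric])
qed simp

lemma Kalpha_append_left:
  assumes "a \<in> Kalpha \<Gamma> \<alpha>"
  shows "(\<lambda>u. a (t @ u)) \<in> Kalpha \<Gamma> \<alpha>"
  unfolding Kalpha_def
proof (intro CollectI conjI allI)
  fix u
  show "a (t @ u) \<in> carrier \<Gamma>"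
    using assms by (rule Kalpha_in_carrier)
  show "a (t @ u) = \<alpha> (a (t @ u @ [False]))"
    using Kalpha_snoc_False[OF assms, of "t @ u"] by simp
qed

lemma const_in_Kalpha: "z \<in> fixed_points \<Gamma> \<alpha> \<Longrightarrow> (\<lambda>_. z) \<in> Kalpha \<Gamma> \<alpha>"
  by (simp add: Kalpha_def fixed_points_def)

(* Padding x with zeros reaches a word y that extends range code words of both tables;
   injectivity of v identifies the two preimages of y. *)
lemma V_table_transport_unique:
  assumes inj: "inj v" and table: "V_table v ts ss \<sigma>" and table': "V_table v ts' ss' \<sigma>'"
    and c: "c \<in> Kalpha \<Gamma> \<alpha>" and d: "d \<in> Kalpha \<Gamma> \<alpha>"
    and c_transport: "\<forall>i<length ts. \<forall>u. c (ss ! \<sigma> i @ u) = a (ts ! i @ u)"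
    and d_transport: "\<forall>i<length ts'. \<forall>u. d (ss' ! \<sigma>' i @ u) = a (ts' ! i @ u)"
  shows "c = d"
proof
  fix x
  obtain i where i: "i < length ts" "is_prefix_of (ss ! \<sigma> i) (pref x zeros)"
    using V_table_obtain_index[OF table] by metis
  obtain i' where i': "i' < length ts'" "is_prefix_of (ss' ! \<sigma>' i') (pref x zeros)"
    using V_table_obtain_index[OF table'] by metis
  define n where "n = length (ss ! \<sigma> i) + length (ss' ! \<sigma>' i')"
  define y where "y = x @ replicate n False"
  define u where "u = drop (length (ss ! \<sigma> i)) y"
  define u' where "u' = drop (length (ss' ! \<sigma>' i')) y"
  have y: "y = ss ! \<sigma> i @ u"
    unfolding u_def y_def by (rule append_replicate_False_split[OF i(2)]) (simp add: n_def)
  have y': "y = ss' ! \<sigma>' i' @ u'"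
    unfolding u'_def y_def by (rule append_replicate_False_split[OF i'(2)]) (simp add: n_def)
  have "v (pref (ts ! i @ u) w) = pref y w" for w
    using table i(1) by (simp add: y pref_append V_table_def)
  moreover have "v (pref (ts' ! i' @ u') w) = pref y w" for w
    using table' i'(1) by (simp add: y' pref_append V_table_def)
  ultimately have "pref (ts ! i @ u) w = pref (ts' ! i' @ u') w" for w
    using inj by (metis injD)
  then have same_source: "ts ! i @ u = ts' ! i' @ u'"
    by (rule pref_eq_imp_eq)
  have "c y = a (ts ! i @ u)"
    using c_transport i(1) by (simp add: y)
  also have "\<dots> = d y"
    using d_transport i'(1) by (simp add: y' same_source)
  finally have "c y = d y" .
  then show "c x = d x"
    using Kalpha_append_replicate_False[OF c, of x n] Kalpha_append_replicate_False[OF d, of x n]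
    by (simp add: y_def)
qed

definition Kalpha_drop :: "('g \<Rightarrow> 'g) \<Rightarrow> nat \<Rightarrow> (bool list \<Rightarrow> 'g) \<Rightarrow> bool list \<Rightarrow> 'g" where
  "Kalpha_drop \<alpha> n c x = (\<alpha> ^^ (n - length x)) (c (drop n (x @ replicate (n - length x) False)))"

lemma Kalpha_drop_append: "length s = n \<Longrightarrow> Kalpha_drop \<alpha> n c (s @ u) = c u"
  by (simp add: Kalpha_drop_def)

lemma Kalpha_drop_in_Kalpha:
  assumes \<alpha>: "\<alpha> \<in> carrier \<Gamma> \<rightarrow> carrier \<Gamma>" and c: "c \<in> Kalpha \<Gamma> \<alpha>"
  shows "Kalpha_drop \<alpha> n c \<in> Kalpha \<Gamma> \<alpha>"
  unfolding Kalpha_def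
proof (intro CollectI conjI allI)
  fix x
  show "Kalpha_drop \<alpha> n c x \<in> carrier \<Gamma>"
    unfolding Kalpha_drop_def by (intro funpow_closed[OF \<alpha>] Kalpha_in_carrier[OF c])
  show "Kalpha_drop \<alpha> n c x = \<alpha> (Kalpha_drop \<alpha> n c (x @ [False]))"
  proof (cases "length x < n")
    case True
    then obtain m where "n - length x = Suc m" "n - Suc (length x) = m"
      by (metis Suc_diff_Suc)
    then show ?thesis
      by (simp add: Kalpha_drop_def replicate_append_same[symmetric])
  next
    case False
    then show ?thesis
      using Kalpha_snoc_False[OF c, of "drop n x"] by (simp add: Kalpha_drop_def)
  qed
qed

lemma Kalpha_glue:
  assumes \<alpha>: "\<alpha> \<in> carrier \<Gamma> \<rightarrow> carrier \<Gamma>" and code: "complete_prefix_code (set ss)" "distinct ss"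
    and f: "\<And>j. j < length ss \<Longrightarrow> f j \<in> Kalpha \<Gamma> \<alpha>"
  shows "\<exists>b\<in>Kalpha \<Gamma> \<alpha>. \<forall>j<length ss. \<forall>u. b (ss ! j @ u) = f j u"
proof -
  define J where "J x = code_index ss (pref x zeros)" for x
  have J: "J x < length ss" for x
    unfolding J_def by (rule code_index[OF code])
  have J_snoc: "J (x @ [False]) = J x" for x
    unfolding J_def pref_snoc_False_zeros ..
  define b where "b x = Kalpha_drop \<alpha> (length (ss ! J x)) (f (J x)) x" for x
  have "b \<in> Kalpha \<Gamma> \<alpha>"
    unfolding Kalpha_def
  proof (intro CollectI conjI allI)
    fix x
    have "Kalpha_drop \<alpha> (length (ss ! J x)) (f (J x)) \<in> Kalpha \<Gamma> \<alpha>"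
      by (intro Kalpha_drop_in_Kalpha[OF \<alpha>] f J)
    then show "b x \<in> carrier \<Gamma>" "b x = \<alpha> (b (x @ [False]))"
      unfolding b_def J_snoc by (rule Kalpha_in_carrier, rule Kalpha_snoc_False)
  qed
  moreover have "b (ss ! j @ u) = f j u" if "j < length ss" for j u
  proof -
    have "J (ss ! j @ u) = j"
      unfolding J_def using that by (intro code_index_eq[OF code]) (simp_all add: pref_append is_prefix_of_pref)
    then show ?thesis
      by (simp add: b_def Kalpha_drop_append)
  qed
  ultimately show ?thesis
    by blast
qed

lemma V_table_transport_exists:
  assumes \<alpha>: "\<alpha> \<in> carrier \<Gamma> \<rightarrow> carrier \<Gamma>" and table: "V_table v ts ss \<sigma>"
    and a: "a \<in> Kalpha \<Gamma> \<alpha>"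
  shows "\<exists>b\<in>Kalpha \<Gamma> \<alpha>. \<forall>i<length ts. \<forall>u. b (ss ! \<sigma> i @ u) = a (ts ! i @ u)"
proof -
  have code: "complete_prefix_code (set ss)" "distinct ss" and perm: "\<sigma> permutes {..<length ts}"
    using table by (auto simp: V_table_def)
  have "\<exists>b\<in>Kalpha \<Gamma> \<alpha>. \<forall>j<length ss. \<forall>u. b (ss ! j @ u) = a (ts ! inv_into UNIV \<sigma> j @ u)"
    by (rule Kalpha_glue[OF \<alpha> code]) (rule Kalpha_append_left[OF a])
  then obtain b where b: "b \<in> Kalpha \<Gamma> \<alpha>"
    and glue: "\<forall>j<length ss. \<forall>u. b (ss ! j @ u) = a (ts ! inv_into UNIV \<sigma> j @ u)"
    by blast
  have "b (ss ! \<sigma> i @ u) = a (ts ! i @ u)" if "i < length ts" for i u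
    using glue V_table_perm_less[OF table that] by (simp add: permutes_inverses(2)[OF perm])
  with b show ?thesis
    by blast
qed

lemma piV_eqI:
  assumes "inj v" "V_table v ts ss \<sigma>" "c \<in> Kalpha \<Gamma> \<alpha>"
    and "\<forall>i<length ts. \<forall>u. c (ss ! \<sigma> i @ u) = a (ts ! i @ u)"
  shows "piV \<Gamma> \<alpha> v a = c"
  unfolding piV_def
proof (rule the_equality)
  fix b
  assume "b \<in> Kalpha \<Gamma> \<alpha> \<and> (\<exists>ts ss \<sigma>. V_table v ts ss \<sigma> \<and> (\<forall>i<length ts. \<forall>u. b (ss ! \<sigma> i @ u) = a (ts ! i @ u)))"
  then obtain ts' ss' \<sigma>' where "b \<in> Kalpha \<Gamma> \<alpha>" "V_table v ts' ss' \<sigma>'"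
    "\<forall>i<length ts'. \<forall>u. b (ss' ! \<sigma>' i @ u) = a (ts' ! i @ u)"
    by blast
  then show "b = c"
    using V_table_transport_unique[OF assms(1) _ assms(2) _ assms(3) _ assms(4)] by simp
qed (use assms in blast)

lemma piV_V_table:
  assumes "\<alpha> \<in> carrier \<Gamma> \<rightarrow> carrier \<Gamma>" "inj v" "V_table v ts ss \<sigma>" "a \<in> Kalpha \<Gamma> \<alpha>"
  shows "piV \<Gamma> \<alpha> v a \<in> Kalpha \<Gamma> \<alpha>"
    and "i < length ts \<Longrightarrow> piV \<Gamma> \<alpha> v a (ss ! \<sigma> i @ u) = a (ts ! i @ u)"
proof -
  obtain b where "b \<in> Kalpha \<Gamma> \<alpha>" "\<forall>i<length ts. \<forall>u. b (ss ! \<sigma> i @ u) = a (ts ! i @ u)"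
    using V_table_transport_exists[OF assms(1,3,4)] by blast
  moreover from this have "piV \<Gamma> \<alpha> v a = b"
    by (intro piV_eqI[OF assms(2,3)])
  ultimately show "piV \<Gamma> \<alpha> v a \<in> Kalpha \<Gamma> \<alpha>"
    and "i < length ts \<Longrightarrow> piV \<Gamma> \<alpha> v a (ss ! \<sigma> i @ u) = a (ts ! i @ u)"
    by simp_all
qed

lemma V_table_id: "V_table id [[]] [[]] id"
  by (auto simp: V_table_def complete_prefix_code_def is_prefix_of_def pref_def permutes_id)

lemma ThompsonV_inj:
  assumes "v \<in> ThompsonV"
  shows "inj v"
proof -
  obtain g where "homeomorphism UNIV UNIV v g"
    using assms unfolding ThompsonV_def by blast
  then have "g (v x) = x" for x
    unfolding homeomorphism_def by blast
  then show ?thesis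
    by (metis injI)
qed

lemma ThompsonV_intro:
  assumes "V_table v ts ss \<sigma>" "continuous_on UNIV v" "continuous_on UNIV v'"
    and "\<And>x. v' (v x) = x" "\<And>y. v (v' y) = y"
  shows "v \<in> ThompsonV"
proof -
  have "range v = UNIV" "range v' = UNIV"
    by (rule surjI, rule assms(5))+ (rule surjI, rule assms(4))
  then have "homeomorphism UNIV UNIV v v'"
    using assms(2-5) by (simp add: homeomorphism_def)
  then show ?thesis
    using assms(1) unfolding ThompsonV_def by blast
qed

lemma id_in_ThompsonV: "id \<in> ThompsonV"
  by (rule ThompsonV_intro[OF V_table_id]) simp_all

lemma piV_id: "b \<in> Kalpha \<Gamma> \<alpha> \<Longrightarrow> piV \<Gamma> \<alpha> id b = b"
  by (rule piV_eqI[OF inj_on_id V_table_id]) auto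

lemma piV_const:
  assumes "v \<in> ThompsonV" "z \<in> fixed_points \<Gamma> \<alpha>"
  shows "piV \<Gamma> \<alpha> v (\<lambda>_. z) = (\<lambda>_. z)"
proof -
  obtain ts ss \<sigma> where "V_table v ts ss \<sigma>"
    using assms(1) unfolding ThompsonV_def by blast
  then show ?thesis
    using assms by (intro piV_eqI[OF ThompsonV_inj] const_in_Kalpha) simp_all
qed

section \<open>Switches and the generator x0\<close>

(* Together with t0 and t1, the words leaving t at some position form a complete prefix code. *)
definition branches :: "bool list \<Rightarrow> bool list list" where
  "branches t = map (\<lambda>k. take k t @ [\<not> t ! k]) [0..<length t]"

definition switch_code :: "bool list \<Rightarrow> bool \<Rightarrow> bool list list" where
  "switch_code t b = (t @ [b]) # (t @ [\<not> b]) # branches t"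

definition switch :: "bool list \<Rightarrow> (nat \<Rightarrow> bool) \<Rightarrow> nat \<Rightarrow> bool" where
  "switch t x = (if is_prefix_of t x then x(length t := \<not> x (length t)) else x)"

lemma in_set_switch_code:
  "s \<in> set (switch_code t b) \<longleftrightarrow> (\<exists>k\<le>length t. \<exists>c. s = take k t @ [c] \<and> (k < length t \<longrightarrow> c = (\<not> t ! k)))"
proof
  assume "s \<in> set (switch_code t b)"
  then consider "s = take (length t) t @ [b]" | "s = take (length t) t @ [\<not> b]"
    | k where "k < length t" "s = take k t @ [\<not> t ! k]"
    by (auto simp: switch_code_def branches_def)
  then show "\<exists>k\<le>length t. \<exists>c. s = take k t @ [c] \<and> (k < length t \<longrightarrow> c = (\<not> t ! k))"
    by cases (blast intro: less_imp_le)+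
next
  assume "\<exists>k\<le>length t. \<exists>c. s = take k t @ [c] \<and> (k < length t \<longrightarrow> c = (\<not> t ! k))"
  then show "s \<in> set (switch_code t b)"
    by (cases b) (auto simp: switch_code_def branches_def le_less)
qed

lemma obtain_first_divergence:
  fixes t :: "bool list"
  obtains k where "k \<le> length t" "\<forall>i<k. x i = t ! i" "k < length t \<longrightarrow> x k = (\<not> t ! k)"
proof (cases "is_prefix_of t x")
  case True
  then show ?thesis
    using that[of "length t"] by (simp add: is_prefix_of_def)
next
  case False
  define P where "P k \<longleftrightarrow> k < length t \<and> x k \<noteq> t ! k" for k
  have "\<exists>k. P k"
    using False by (auto simp: P_def is_prefix_of_def)
  then have "P (Least P)"
    by (rule LeastI_ex)
  then have least: "Least P < length t" "x (Least P) \<noteq> t ! Least P"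
    by (simp_all add: P_def)
  have "x i = t ! i" if "i < Least P" for i
    using not_less_Least[OF that] that least(1) unfolding P_def by simp
  with least show ?thesis
    using that[of "Least P"] by simp
qed

lemma complete_prefix_code_switch_code: "complete_prefix_code (set (switch_code t b))"
proof -
  have "\<exists>!s. s \<in> set (switch_code t b) \<and> is_prefix_of s x" for x
  proof -
    obtain k where k: "k \<le> length t" "\<forall>i<k. x i = t ! i" "k < length t \<longrightarrow> x k = (\<not> t ! k)"
      by (rule obtain_first_divergence)
    show ?thesis
    proof (rule ex1I[of _ "take k t @ [x k]"])
      fix s
      assume s_x: "s \<in> set (switch_code t b) \<and> is_prefix_of s x"
      then obtain j c where s: "s = take j t @ [c]" "j \<le> length t" "j < length t \<longrightarrow> c = (\<not> t ! j)"
        unfolding in_set_switch_code by blast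
      with s_x have "\<forall>i<j. x i = t ! i" "x j = c"
        by (simp_all add: is_prefix_of_take_snoc)
      note s = s this
      have "\<not> j < k"
      proof
        assume "j < k"
        with k(1,2) have "j < length t" "x j = t ! j"
          by simp_all
        with s(3,5) show False
          by simp
      qed
      moreover have "\<not> k < j"
      proof
        assume "k < j"
        with s(2,4) have "k < length t" "x k = t ! k"
          by simp_all
        with k(3) show False
          by simp
      qed
      ultimately show "s = take k t @ [x k]"
        using s(1,5) by simp
    next
      have "take k t @ [x k] \<in> set (switch_code t b)"
        unfolding in_set_switch_code using k(1,3) by blast
      moreover have "is_prefix_of (take k t @ [x k]) x"
        using k(1,2) by (simp add: is_prefix_of_take_snoc)
      ultimately show "take k t @ [x k] \<in> set (switch_code t b) \<and> is_prefix_of (take k t @ [x k]) x"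
        by blast
    qed
  qed
  then show ?thesis
    by (simp add: complete_prefix_code_def)
qed

lemma distinct_switch_code: "distinct (switch_code t b)"
proof -
  have "inj_on (\<lambda>k. take k t @ [\<not> t ! k]) {0..<length t}"
    by (rule inj_onI) (drule arg_cong[of _ _ length], simp)
  then have "distinct (branches t)"
    by (simp add: branches_def distinct_map)
  moreover have "length s \<le> length t" if "s \<in> set (branches t)" for s
    using that by (auto simp: branches_def)
  then have "t @ [c] \<notin> set (branches t)" for c
    by fastforce
  ultimately show ?thesis
    by (simp add: switch_code_def)
qed

lemma not_is_prefix_of_pref_branch:
  assumes "s \<in> set (branches t)"
  shows "\<not> is_prefix_of t (pref s w)"
proof -
  obtain k where k: "k < length t" "s = take k t @ [\<not> t ! k]"
    using assms by (auto simp: branches_def)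
  then have "pref s w k = (\<not> t ! k)"
    by (simp add: pref_def nth_append)
  with k(1) show ?thesis
    by (auto simp: is_prefix_of_def)
qed

lemma switch_pref_snoc: "switch t (pref (t @ [b]) w) = pref (t @ [\<not> b]) w"
proof -
  have "is_prefix_of t (pref (t @ [b]) w)"
    by (simp add: pref_append is_prefix_of_pref)
  then show ?thesis
    by (auto simp: switch_def pref_def nth_append fun_eq_iff)
qed

lemma V_table_switch: "V_table (switch t) (switch_code t False) (switch_code t True) id"
proof -
  have "switch t (pref (switch_code t False ! i) w) = pref (switch_code t True ! i) w"
    if "i < length (switch_code t False)" for i w
  proof (cases i)
    case (Suc j)
    show ?thesis
    proof (cases j)
      case (Suc l)
      with that \<open>i = Suc j\<close> have "branches t ! l \<in> set (branches t)"
        by (simp add: switch_code_def)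
      with \<open>i = Suc j\<close> Suc show ?thesis
        using not_is_prefix_of_pref_branch by (simp add: switch_code_def switch_def)
    qed (use \<open>i = Suc j\<close> switch_pref_snoc[of t True] in \<open>simp add: switch_code_def\<close>)
  qed (use switch_pref_snoc[of t False] in \<open>simp add: switch_code_def\<close>)
  then show ?thesis
    using complete_prefix_code_switch_code distinct_switch_code
    by (simp add: V_table_def permutes_id) (simp add: switch_code_def)
qed

lemma switch_switch: "switch t (switch t x) = x"
  by (auto simp: switch_def is_prefix_of_def fun_eq_iff)

lemma continuous_on_switch: "continuous_on UNIV (switch t)"
proof (rule continuous_on_if_coordinates_locally_determined)
  fix k
  have "switch t x k = switch t y k" if "\<forall>i<length t + k + 1. x i = y i" for x y
  proof -
    have "is_prefix_of t x \<longleftrightarrow> is_prefix_of t y" "x k = y k" "x (length t) = y (length t)"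
      using that by (auto simp: is_prefix_of_def)
    then show ?thesis
      by (simp add: switch_def)
  qed
  then show "\<exists>N. \<forall>x y. (\<forall>i<N. x i = y i) \<longrightarrow> switch t x k = switch t y k"
    by blast
qed

lemma switch_in_ThompsonV: "switch t \<in> ThompsonV"
  by (rule ThompsonV_intro[OF V_table_switch continuous_on_switch continuous_on_switch switch_switch switch_switch])

lemma commute_with_switches_imp_id:
  assumes "inj v" "\<And>t. v \<circ> switch t = switch t \<circ> v"
  shows "v = id"
proof
  fix x
  have "v x i = x i" for i
  proof -
    define t where "t = map x [0..<Suc i]"
    have "is_prefix_of t x"
      by (simp add: t_def is_prefix_of_def del: upt_Suc)
    then have "switch t x \<noteq> x"
      by (auto simp: switch_def fun_eq_iff t_def)
    then have "switch t (v x) \<noteq> v x"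
      using assms by (metis comp_apply injD)
    then have "is_prefix_of t (v x)"
      by (auto simp: switch_def)
    then show ?thesis
      by (simp add: t_def is_prefix_of_def del: upt_Suc)
  qed
  then show "v x = id x"
    by (simp add: fun_eq_iff)
qed

(* The generator x0 of Thompson's group F: 0u \<mapsto> 00u, 10u \<mapsto> 01u, 11u \<mapsto> 1u. *)
definition thompson_x0 :: "(nat \<Rightarrow> bool) \<Rightarrow> nat \<Rightarrow> bool" where
  "thompson_x0 x =
    (if \<not> x 0 then pref [False] x else if \<not> x 1 then x(0 := False, 1 := True) else (\<lambda>k. x (Suc k)))"

definition thompson_x0_inv :: "(nat \<Rightarrow> bool) \<Rightarrow> nat \<Rightarrow> bool" where
  "thompson_x0_inv y =
    (if y 0 then pref [True] y else if y 1 then y(0 := True, 1 := False) else (\<lambda>k. y (Suc k)))"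

lemma thompson_x0_inv_thompson_x0: "thompson_x0_inv (thompson_x0 x) = x"
  by (auto simp: thompson_x0_def thompson_x0_inv_def pref_def fun_eq_iff)

lemma thompson_x0_thompson_x0_inv: "thompson_x0 (thompson_x0_inv y) = y"
  by (auto simp: thompson_x0_def thompson_x0_inv_def pref_def fun_eq_iff)

lemma continuous_on_thompson_x0: "continuous_on UNIV thompson_x0"
  and continuous_on_thompson_x0_inv: "continuous_on UNIV thompson_x0_inv"
proof -
  have "thompson_x0 x k = thompson_x0 y k \<and> thompson_x0_inv x k = thompson_x0_inv y k"
    if "\<forall>i<k + 2. x i = y i" for x y k
  proof -
    have "x 0 = y 0" "x 1 = y 1" "x (k - 1) = y (k - 1)" "x k = y k" "x (Suc k) = y (Suc k)"
      using that by auto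
    then show ?thesis
      by (simp add: thompson_x0_def thompson_x0_inv_def pref_def)
  qed
  then show "continuous_on UNIV thompson_x0" "continuous_on UNIV thompson_x0_inv"
    by (blast intro: continuous_on_if_coordinates_locally_determined)+
qed

lemma V_table_thompson_x0:
  "V_table thompson_x0 [[False], [True, False], [True, True]] [[False, False], [False, True], [True]] id"
proof -
  have "set (switch_code [True] False) = set [[False], [True, False], [True, True]]"
    "switch_code [False] False = [[False, False], [False, True], [True]]"
    by (auto simp: switch_code_def branches_def)
  then have "complete_prefix_code (set [[False], [True, False], [True, True]])"
    "complete_prefix_code (set [[False, False], [False, True], [True]])"
    using complete_prefix_code_switch_code by metis+
  moreover have "thompson_x0 (pref ([[False], [True, False], [True, True]] ! i) w)
      = pref ([[False, False], [False, True], [True]] ! i) w" if "i < 3" for i w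
    using that by (auto simp: less_Suc_eq thompson_x0_def pref_def fun_eq_iff nth_Cons')
  ultimately show ?thesis
    by (simp add: V_table_def permutes_id)
qed

lemma thompson_x0_in_ThompsonV: "thompson_x0 \<in> ThompsonV"
  by (rule ThompsonV_intro[OF V_table_thompson_x0 continuous_on_thompson_x0 continuous_on_thompson_x0_inv
        thompson_x0_inv_thompson_x0 thompson_x0_thompson_x0_inv])

section \<open>The centre of G(\<alpha>)\<close>

(* Kval chooses its representative u with SOME; the relation a(u) = \<alpha>(a(u0)) makes the value
   independent of that choice. *)
lemma Kval_pref:
  assumes a: "a \<in> Kalpha \<Gamma> \<alpha>"
  shows "Kval \<alpha> a (pref u zeros) = (\<alpha> ^^ length u) (a u)"
proof -
  have same_value: "(\<alpha> ^^ length u') (a u') = (\<alpha> ^^ length u) (a u)"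
    if "pref u zeros = pref u' zeros" "length u \<le> length u'" for u u'
  proof -
    define n where "n = length u' - length u"
    have "u' = u @ replicate n False"
      unfolding n_def by (rule pref_zeros_eq_imp_append_replicate[OF that])
    then have "a u = (\<alpha> ^^ n) (a u')"
      using Kalpha_append_replicate_False[OF a] by simp
    moreover have "length u' = length u + n"
      using that(2) by (simp add: n_def)
    ultimately show ?thesis
      by (simp add: funpow_add)
  qed
  define u' where "u' = (SOME u'. pref u zeros = pref u' zeros)"
  have "pref u zeros = pref u' zeros"
    unfolding u'_def by (rule someI[of _ u]) (rule refl)
  then have "(\<alpha> ^^ length u') (a u') = (\<alpha> ^^ length u) (a u)"
    using same_value[of u u'] same_value[of u' u] by (cases "length u \<le> length u'") simp_all
  then show ?thesis
    by (simp add: Kval_def u'_def)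
qed

lemma Kval_eq_const_iff:
  assumes a: "a \<in> Kalpha \<Gamma> \<alpha>" and bij: "bij_betw \<alpha> (carrier \<Gamma>) (carrier \<Gamma>)"
    and z: "z \<in> fixed_points \<Gamma> \<alpha>"
  shows "(\<forall>x\<in>Q2. Kval \<alpha> a x = z) \<longleftrightarrow> a = (\<lambda>_. z)"
proof
  assume Kval_z: "\<forall>x\<in>Q2. Kval \<alpha> a x = z"
  have "a u = z" for u
  proof -
    have "pref u zeros \<in> Q2"
      by (auto simp: Q2_def)
    with Kval_z have "Kval \<alpha> a (pref u zeros) = z"
      by blast
    then have "(\<alpha> ^^ length u) (a u) = z"
      by (simp add: Kval_pref[OF a])
    also have "z = (\<alpha> ^^ length u) z"
      using z by (simp add: fixed_points_def funpow_fixed_point)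
    finally have "(\<alpha> ^^ length u) (a u) = (\<alpha> ^^ length u) z" .
    moreover have "inj_on (\<alpha> ^^ length u) (carrier \<Gamma>)"
      using bij_betw_funpow[OF bij] by (rule bij_betw_imp_inj_on)
    ultimately show ?thesis
      using Kalpha_in_carrier[OF a] z by (auto simp: fixed_points_def dest: inj_onD)
  qed
  then show "a = (\<lambda>_. z)"
    by blast
next
  assume "a = (\<lambda>_. z)"
  then show "\<forall>x\<in>Q2. Kval \<alpha> a x = z"
    using Kval_pref[OF a] z by (auto simp: Q2_def fixed_points_def funpow_fixed_point)
qed

lemma Kalpha_Kval_const_iff:
  assumes bij: "bij_betw \<alpha> (carrier \<Gamma>) (carrier \<Gamma>)" and Z: "Z \<subseteq> fixed_points \<Gamma> \<alpha>"
  shows "a \<in> Kalpha \<Gamma> \<alpha> \<and> (\<exists>z\<in>Z. \<forall>x\<in>Q2. Kval \<alpha> a x = z) \<longleftrightarrow> (\<exists>z\<in>Z. a = (\<lambda>_. z))"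
proof
  assume "a \<in> Kalpha \<Gamma> \<alpha> \<and> (\<exists>z\<in>Z. \<forall>x\<in>Q2. Kval \<alpha> a x = z)"
  then obtain z where a: "a \<in> Kalpha \<Gamma> \<alpha>" and z: "z \<in> Z" "\<forall>x\<in>Q2. Kval \<alpha> a x = z"
    by blast
  then have "a = (\<lambda>_. z)"
    using Kval_eq_const_iff[OF a bij] Z by blast
  with z(1) show "\<exists>z\<in>Z. a = (\<lambda>_. z)"
    by blast
next
  assume "\<exists>z\<in>Z. a = (\<lambda>_. z)"
  then obtain z where z: "z \<in> Z" "a = (\<lambda>_. z)"
    by blast
  with Z have z_fixed: "z \<in> fixed_points \<Gamma> \<alpha>"
    by blast
  then have a: "a \<in> Kalpha \<Gamma> \<alpha>"
    unfolding z(2) by (rule const_in_Kalpha)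
  then have "\<forall>x\<in>Q2. Kval \<alpha> a x = z"
    using Kval_eq_const_iff[OF a bij z_fixed] z(2) by simp
  with a z(1) show "a \<in> Kalpha \<Gamma> \<alpha> \<and> (\<exists>z\<in>Z. \<forall>x\<in>Q2. Kval \<alpha> a x = z)"
    by blast
qed

lemma Kalpha_obtain_root_value:
  assumes bij: "bij_betw \<alpha> (carrier \<Gamma>) (carrier \<Gamma>)" and h: "h \<in> carrier \<Gamma>"
  obtains b where "b \<in> Kalpha \<Gamma> \<alpha>" "b [] = h"
proof -
  define \<beta> where "\<beta> = inv_into (carrier \<Gamma>) \<alpha>"
  have \<beta>: "\<beta> \<in> carrier \<Gamma> \<rightarrow> carrier \<Gamma>"
    using bij_betw_inv_into[OF bij] unfolding \<beta>_def by (auto dest: bij_betwE)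
  have \<alpha>_\<beta>: "\<alpha> (\<beta> y) = y" if "y \<in> carrier \<Gamma>" for y
    unfolding \<beta>_def using bij that by (rule bij_betw_inv_into_right)
  define b where "b u = (\<beta> ^^ length u) h" for u :: "bool list"
  have "b \<in> Kalpha \<Gamma> \<alpha>"
    unfolding Kalpha_def b_def using funpow_closed[OF \<beta> h] by (simp add: \<alpha>_\<beta>)
  then show ?thesis
    using that by (simp add: b_def)
qed

lemma Galpha_mult_Pair [simp]:
  "Galpha_mult \<Gamma> \<alpha> (a, v) (b, w) = ((\<lambda>u. a u \<otimes>\<^bsub>\<Gamma>\<^esub> piV \<Gamma> \<alpha> v b u), v \<circ> w)"
  by (simp add: Galpha_mult_def)

lemma Galpha_centreD:
  assumes "(a, v) \<in> Galpha_centre \<Gamma> \<alpha>"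
  shows "a \<in> Kalpha \<Gamma> \<alpha>" "v \<in> ThompsonV"
    and "b \<in> Kalpha \<Gamma> \<alpha> \<Longrightarrow> w \<in> ThompsonV \<Longrightarrow>
      (\<lambda>u. a u \<otimes>\<^bsub>\<Gamma>\<^esub> piV \<Gamma> \<alpha> v b u) = (\<lambda>u. b u \<otimes>\<^bsub>\<Gamma>\<^esub> piV \<Gamma> \<alpha> w a u) \<and> v \<circ> w = w \<circ> v"
  using assms by (auto simp: Galpha_centre_def Galpha_carrier_def)

lemma Galpha_centre_snd_eq_id:
  assumes "(a, v) \<in> Galpha_centre \<Gamma> \<alpha>" "Kalpha \<Gamma> \<alpha> \<noteq> {}"
  shows "v = id"
proof (rule commute_with_switches_imp_id)
  show "inj v"
    using Galpha_centreD(2)[OF assms(1)] by (rule ThompsonV_inj)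
  obtain b where "b \<in> Kalpha \<Gamma> \<alpha>"
    using assms(2) by blast
  then show "v \<circ> switch t = switch t \<circ> v" for t
    using Galpha_centreD(3)[OF assms(1) _ switch_in_ThompsonV] by blast
qed

lemma Galpha_centre_fst_invariant:
  assumes "group \<Gamma>" "\<alpha> \<in> hom \<Gamma> \<Gamma>" "(a, v) \<in> Galpha_centre \<Gamma> \<alpha>" "w \<in> ThompsonV"
  shows "piV \<Gamma> \<alpha> w a = a"
proof -
  interpret group \<Gamma>
    by fact
  have \<alpha>: "\<alpha> \<in> carrier \<Gamma> \<rightarrow> carrier \<Gamma>" "\<alpha> \<one>\<^bsub>\<Gamma>\<^esub> = \<one>\<^bsub>\<Gamma>\<^esub>"
    using assms(2) hom_one[OF assms(2) assms(1) assms(1)] by (auto simp: hom_def)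
  then have one_fixed: "\<one>\<^bsub>\<Gamma>\<^esub> \<in> fixed_points \<Gamma> \<alpha>"
    by (simp add: fixed_points_def)
  then have one: "(\<lambda>_. \<one>\<^bsub>\<Gamma>\<^esub>) \<in> Kalpha \<Gamma> \<alpha>"
    by (rule const_in_Kalpha)
  note a = Galpha_centreD(1)[OF assms(3)] and v = Galpha_centreD(2)[OF assms(3)]
  obtain ts ss \<sigma> where "V_table w ts ss \<sigma>"
    using assms(4) unfolding ThompsonV_def by blast
  then have "piV \<Gamma> \<alpha> w a \<in> Kalpha \<Gamma> \<alpha>"
    using piV_V_table(1)[OF \<alpha>(1) ThompsonV_inj[OF assms(4)] _ a] by blast
  moreover have "(\<lambda>u. a u \<otimes>\<^bsub>\<Gamma>\<^esub> \<one>\<^bsub>\<Gamma>\<^esub>) = (\<lambda>u. \<one>\<^bsub>\<Gamma>\<^esub> \<otimes>\<^bsub>\<Gamma>\<^esub> piV \<Gamma> \<alpha> w a u)"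
    using Galpha_centreD(3)[OF assms(3) one assms(4)] piV_const[OF v one_fixed] by simp
  ultimately show ?thesis
    using Kalpha_in_carrier[OF a] Kalpha_in_carrier by (fastforce simp: fun_eq_iff)
qed

lemma piV_switch_fixed_imp_sibling_eq:
  assumes "\<alpha> \<in> carrier \<Gamma> \<rightarrow> carrier \<Gamma>" "a \<in> Kalpha \<Gamma> \<alpha>" "piV \<Gamma> \<alpha> (switch t) a = a"
  shows "a (t @ [True]) = a (t @ [False])"
proof -
  have "piV \<Gamma> \<alpha> (switch t) a (switch_code t True ! id 0 @ []) = a (switch_code t False ! 0 @ [])"
    by (rule piV_V_table(2)[OF assms(1) ThompsonV_inj[OF switch_in_ThompsonV] V_table_switch assms(2)])
      (simp add: switch_code_def)
  with assms(3) show ?thesis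
    by (simp add: switch_code_def)
qed

lemma piV_thompson_x0_fixed_imp_eq:
  assumes "\<alpha> \<in> carrier \<Gamma> \<rightarrow> carrier \<Gamma>" "a \<in> Kalpha \<Gamma> \<alpha>" "piV \<Gamma> \<alpha> thompson_x0 a = a"
  shows "a [False, False] = a [False]"
proof -
  have "piV \<Gamma> \<alpha> thompson_x0 a ([[False, False], [False, True], [True]] ! id 0 @ [])
      = a ([[False], [True, False], [True, True]] ! 0 @ [])"
    by (rule piV_V_table(2)[OF assms(1) ThompsonV_inj[OF thompson_x0_in_ThompsonV] V_table_thompson_x0 assms(2)])
      simp
  with assms(3) show ?thesis
    by simp
qed

lemma Kalpha_const_if_sibling_eq:
  assumes a: "a \<in> Kalpha \<Gamma> \<alpha>" and inj: "inj_on \<alpha> (carrier \<Gamma>)"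
    and sibling: "\<And>t. a (t @ [True]) = a (t @ [False])" and shift: "a [False, False] = a [False]"
  shows "\<exists>c\<in>fixed_points \<Gamma> \<alpha>. a = (\<lambda>_. c)"
proof -
  define c where "c = a [False]"
  have fixed: "\<alpha> c = c"
    using Kalpha_snoc_False[OF a, of "[False]"] shift by (simp add: c_def)
  have "a u = c" for u
  proof (induction u rule: rev_induct)
    case (snoc b u)
    have "\<alpha> (a (u @ [False])) = \<alpha> c"
      using Kalpha_snoc_False[OF a, of u] snoc fixed by simp
    then have "a (u @ [False]) = c"
      using inj Kalpha_in_carrier[OF a] unfolding c_def by (meson inj_onD)
    then show ?case
      using sibling[of u] by (cases b) simp_all
  qed (use Kalpha_snoc_False[OF a, of "[]"] fixed in \<open>simp add: c_def\<close>)
  moreover have "c \<in> carrier \<Gamma>"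
    unfolding c_def by (rule Kalpha_in_carrier[OF a])
  ultimately show ?thesis
    using fixed by (auto simp: fixed_points_def)
qed

lemma Galpha_centre_const_in_group_centre:
  assumes bij: "bij_betw \<alpha> (carrier \<Gamma>) (carrier \<Gamma>)" and central: "((\<lambda>_. c), id) \<in> Galpha_centre \<Gamma> \<alpha>"
  shows "c \<in> group_centre \<Gamma>"
proof -
  have c: "(\<lambda>_. c) \<in> Kalpha \<Gamma> \<alpha>"
    by (rule Galpha_centreD(1)[OF central])
  have "c \<otimes>\<^bsub>\<Gamma>\<^esub> h = h \<otimes>\<^bsub>\<Gamma>\<^esub> c" if h: "h \<in> carrier \<Gamma>" for h
  proof -
    obtain b where b: "b \<in> Kalpha \<Gamma> \<alpha>" "b [] = h"
      using Kalpha_obtain_root_value[OF bij h] by blast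
    then have "(\<lambda>u. c \<otimes>\<^bsub>\<Gamma>\<^esub> b u) = (\<lambda>u. b u \<otimes>\<^bsub>\<Gamma>\<^esub> c)"
      using Galpha_centreD(3)[OF central b(1) id_in_ThompsonV] by (simp add: piV_id c)
    then show ?thesis
      using b(2) by (metis (no_types))
  qed
  then show ?thesis
    using Kalpha_in_carrier[OF c] by (simp add: group_centre_def)
qed

lemma const_in_Galpha_centre:
  assumes "z \<in> group_centre \<Gamma> \<inter> fixed_points \<Gamma> \<alpha>"
  shows "((\<lambda>_. z), id) \<in> Galpha_centre \<Gamma> \<alpha>"
proof -
  have z_fixed: "z \<in> fixed_points \<Gamma> \<alpha>"
    and z_comm: "\<And>h. h \<in> carrier \<Gamma> \<Longrightarrow> z \<otimes>\<^bsub>\<Gamma>\<^esub> h = h \<otimes>\<^bsub>\<Gamma>\<^esub> z"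
    using assms by (auto simp: group_centre_def)
  have "Galpha_mult \<Gamma> \<alpha> ((\<lambda>_. z), id) (b, w) = Galpha_mult \<Gamma> \<alpha> (b, w) ((\<lambda>_. z), id)"
    if "b \<in> Kalpha \<Gamma> \<alpha>" "w \<in> ThompsonV" for b w
    using z_comm[OF Kalpha_in_carrier[OF that(1)]]
    by (simp add: piV_id[OF that(1)] piV_const[OF that(2) z_fixed])
  then show ?thesis
    using const_in_Kalpha[OF z_fixed] id_in_ThompsonV
    by (auto simp: Galpha_centre_def Galpha_carrier_def)
qed

lemma Galpha_centreE:
  assumes "group \<Gamma>" "\<alpha> \<in> iso \<Gamma> \<Gamma>" "(a, v) \<in> Galpha_centre \<Gamma> \<alpha>"
  obtains c where "c \<in> group_centre \<Gamma> \<inter> fixed_points \<Gamma> \<alpha>" "a = (\<lambda>_. c)" "v = id"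
proof -
  have hom: "\<alpha> \<in> hom \<Gamma> \<Gamma>" and bij: "bij_betw \<alpha> (carrier \<Gamma>) (carrier \<Gamma>)"
    using assms(2) by (auto simp: iso_def)
  then have \<alpha>: "\<alpha> \<in> carrier \<Gamma> \<rightarrow> carrier \<Gamma>" "inj_on \<alpha> (carrier \<Gamma>)"
    by (auto simp: hom_def bij_betw_def)
  note a = Galpha_centreD(1)[OF assms(3)]
  have invariant: "piV \<Gamma> \<alpha> w a = a" if "w \<in> ThompsonV" for w
    by (rule Galpha_centre_fst_invariant[OF assms(1) hom assms(3) that])
  obtain c where c: "c \<in> fixed_points \<Gamma> \<alpha>" "a = (\<lambda>_. c)"
    using Kalpha_const_if_sibling_eq[OF a \<alpha>(2)
      piV_switch_fixed_imp_sibling_eq[OF \<alpha>(1) a invariant[OF switch_in_ThompsonV]]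
      piV_thompson_x0_fixed_imp_eq[OF \<alpha>(1) a invariant[OF thompson_x0_in_ThompsonV]]]
    by blast
  have "v = id"
    using assms(3) a by (intro Galpha_centre_snd_eq_id) blast+
  with assms(3) c(2) have "c \<in> group_centre \<Gamma>"
    by (intro Galpha_centre_const_in_group_centre[OF bij]) simp
  with c \<open>v = id\<close> show ?thesis
    using that by blast
qed

lemma Galpha_centre_eq_constants:
  assumes "group \<Gamma>" "\<alpha> \<in> iso \<Gamma> \<Gamma>"
  shows "Galpha_centre \<Gamma> \<alpha> = (\<lambda>z. ((\<lambda>_. z), id)) ` (group_centre \<Gamma> \<inter> fixed_points \<Gamma> \<alpha>)"
    (is "_ = ?constants")
proof (intro equalityI subsetI)
  fix g
  assume g: "g \<in> Galpha_centre \<Gamma> \<alpha>"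
  obtain a v where g_eq: "g = (a, v)"
    by fastforce
  with g obtain c where "c \<in> group_centre \<Gamma> \<inter> fixed_points \<Gamma> \<alpha>" "a = (\<lambda>_. c)" "v = id"
    using Galpha_centreE[OF assms] by blast
  with g_eq have "c \<in> group_centre \<Gamma> \<inter> fixed_points \<Gamma> \<alpha>" "g = ((\<lambda>_. c), id)"
    by simp_all
  then show "g \<in> ?constants"
    by (rule rev_image_eqI)
next
  fix g
  assume "g \<in> ?constants"
  then obtain z where "z \<in> group_centre \<Gamma> \<inter> fixed_points \<Gamma> \<alpha>" "g = ((\<lambda>_. z), id)"
    by (rule imageE)
  then show "g \<in> Galpha_centre \<Gamma> \<alpha>"
    using const_in_Galpha_centre by simp
qed

theorem mainTheorem9:
  fixes \<Gamma> :: "('g, 'b) monoid_scheme" and \<alpha> :: "'g \<Rightarrow> 'g"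
  assumes "group \<Gamma>" and "\<alpha> \<in> iso \<Gamma> \<Gamma>"
  shows "Galpha_centre \<Gamma> \<alpha> =
    {(a, id) | a. a \<in> Kalpha \<Gamma> \<alpha> \<and>
       (\<exists>z \<in> group_centre \<Gamma> \<inter> fixed_points \<Gamma> \<alpha>. \<forall>x \<in> Q2. Kval \<alpha> a x = z)}"
proof -
  have bij: "bij_betw \<alpha> (carrier \<Gamma>) (carrier \<Gamma>)"
    using assms(2) by (simp add: iso_def)
  show ?thesis
    unfolding Galpha_centre_eq_constants[OF assms] Kalpha_Kval_const_iff[OF bij Int_lower2] by blast
qed

end
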